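(* Let $P$ be a finite graded poset with unique minimal element $\hat0$ and rank function $\rho$ with $\rho(\hat0)=0$, and let $\theta$ be an equivalence relation on $P$ such that $\rho$ is constant on $\theta$-classes. Equip $P/\theta$ with the transitive closure $\preceq$ of the quotient relation $\leqslant_\theta$ (a graded partial order with rank $[p]\mapsto\rho(p)$ and unique minimal element $[\hat0]$). Suppose that for every $p\in P$, $$\sum_{[q]\preceq[p]}\ \sum_{r\in[q]}\mu_P(r)=\begin{cases}1 & \text{if } [p]=[\hat0],\\ 0 & \text{otherwise}.\end{cases}$$ Then $\mu_{P/\theta}([p])=\sum_{q\in[p]}\mu_P(q)$ for all $p\in P$, and $\chi_{P/\theta}(t)=\chi_P(t)$.
   Context: For a finite poset $P$ with unique minimal element $\hat0$, the Möbius function $\mu_P\colon P\to\mathbb Z$ is defined recursively by $\sum_{p\leqslant q}\mu_P(p)=\delta_{\hat0,q}$ for all $q\in P$. A poset is graded with rank function $\rho$ if $p<q\Rightarrow\rho(p)<\rho(q)$ and $p\lessdot q\Rightarrow\rho(q)=\rho(p)+1$; for graded $P$ with $\rho(\hat0)=0$, $\rho(P)$ denotes the maximal value of $\rho$, and the characteristic polynomial is $\chi_P(t)=\sum_{p\in P}\mu_P(p)t^{\rho(P)-\rho(p)}$. The quotient relation is $[p]\leqslant_\theta[q]$ iff there exist $p'\in[p]$, $q'\in[q]$ with $p'\leqslant q'$. *)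

theory Defs
  imports "HOL-Computational_Algebra.Polynomial"
begin

definition partial_order_on' :: "'a set \<Rightarrow> ('a \<Rightarrow> 'a \<Rightarrow> bool) \<Rightarrow> bool" where
  "partial_order_on' S le \<longleftrightarrow>
     (\<forall>x\<in>S. le x x) \<and>
     (\<forall>x\<in>S. \<forall>y\<in>S. le x y \<and> le y x \<longrightarrow> x = y) \<and>
     (\<forall>x\<in>S. \<forall>y\<in>S. \<forall>z\<in>S. le x y \<and> le y z \<longrightarrow> le x z)"

definition unique_minimal :: "'a set \<Rightarrow> ('a \<Rightarrow> 'a \<Rightarrow> bool) \<Rightarrow> 'a \<Rightarrow> bool" where
  "unique_minimal S le z \<longleftrightarrow> z \<in> S \<and>
     (\<forall>x\<in>S. (\<forall>y\<in>S. le y x \<longrightarrow> y = x) \<longleftrightarrow> x = z)"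

definition covers :: "'a set \<Rightarrow> ('a \<Rightarrow> 'a \<Rightarrow> bool) \<Rightarrow> 'a \<Rightarrow> 'a \<Rightarrow> bool" where
  "covers S le p q \<longleftrightarrow> p \<in> S \<and> q \<in> S \<and> le p q \<and> p \<noteq> q \<and>
     \<not> (\<exists>r\<in>S. le p r \<and> le r q \<and> r \<noteq> p \<and> r \<noteq> q)"

definition graded_by :: "'a set \<Rightarrow> ('a \<Rightarrow> 'a \<Rightarrow> bool) \<Rightarrow> ('a \<Rightarrow> nat) \<Rightarrow> bool" where
  "graded_by S le rho \<longleftrightarrow>
     (\<forall>p\<in>S. \<forall>q\<in>S. le p q \<and> p \<noteq> q \<longrightarrow> rho p < rho q) \<and>
     (\<forall>p q. covers S le p q \<longrightarrow> rho q = rho p + 1)"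

definition moebius :: "'a set \<Rightarrow> ('a \<Rightarrow> 'a \<Rightarrow> bool) \<Rightarrow> 'a \<Rightarrow> 'a \<Rightarrow> int" where
  "moebius S le z = (THE f. (\<forall>q\<in>S. (\<Sum>p\<in>{p\<in>S. le p q}. f p) = (if q = z then 1 else 0))
                          \<and> (\<forall>x. x \<notin> S \<longrightarrow> f x = 0))"

definition char_poly :: "'a set \<Rightarrow> ('a \<Rightarrow> 'a \<Rightarrow> bool) \<Rightarrow> 'a \<Rightarrow> ('a \<Rightarrow> nat) \<Rightarrow> int poly" where
  "char_poly S le z rho =
     (\<Sum>p\<in>S. monom (moebius S le z p) (Max (rho ` S) - rho p))"

definition quot_rel :: "('a \<Rightarrow> 'a \<Rightarrow> bool) \<Rightarrow> 'a set \<Rightarrow> 'a set \<Rightarrow> bool" where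
  "quot_rel le X Y \<longleftrightarrow> (\<exists>p\<in>X. \<exists>q\<in>Y. le p q)"

definition quot_order :: "'a set \<Rightarrow> 'a rel \<Rightarrow> ('a \<Rightarrow> 'a \<Rightarrow> bool) \<Rightarrow> 'a set \<Rightarrow> 'a set \<Rightarrow> bool" where
  "quot_order S \<theta> le = tranclp (\<lambda>X Y. X \<in> S // \<theta> \<and> Y \<in> S // \<theta> \<and> quot_rel le X Y)"

definition quot_rank :: "('a \<Rightarrow> nat) \<Rightarrow> 'a set \<Rightarrow> nat" where
  "quot_rank rho X = rho (SOME p. p \<in> X)"

end

theory Submission
  imports Defs
begin

text \<open>The class sums \<open>F [p] = \<Sum>q\<in>[p]. \<mu>\<^sub>P q\<close> satisfy, by hypothesis, the defining
  equations of the M\<ouml>bius function of \<open>P/\<theta>\<close>. These equations are triangular with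
  respect to the rank: the quotient order is reflexive and, since \<open>\<rho>\<close> is strictly monotone
  on \<open>P\<close> and constant on classes, strictly increases the rank between distinct classes. Hence
  they have a unique solution, by induction on the rank, and \<open>\<mu>\<^sub>P\<^sub>/\<^sub>\<theta> = F\<close>.
  The characteristic polynomials then agree after regrouping the sum over \<open>P\<close> into
  \<open>\<theta>\<close>-classes, on which the rank is constant, and both posets have the same maximal rank.\<close>

lemma moebius_eqI:
  fixes S :: "'a set" and le :: "'a \<Rightarrow> 'a \<Rightarrow> bool" and rk :: "'a \<Rightarrow> nat" and f :: "'a \<Rightarrow> int"
  assumes fin: "finite S"
    and le_refl: "\<forall>x\<in>S. le x x"
    and rank: "\<forall>x\<in>S. \<forall>y\<in>S. le x y \<and> x \<noteq> y \<longrightarrow> rk x < rk y"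
    and sums: "\<forall>q\<in>S. (\<Sum>p\<in>{p\<in>S. le p q}. f p) = (if q = z then 1 else 0)"
    and supp: "\<forall>x. x \<notin> S \<longrightarrow> f x = 0"
  shows "moebius S le z = f"
  unfolding moebius_def
proof (rule the_equality)
  show "(\<forall>q\<in>S. (\<Sum>p\<in>{p\<in>S. le p q}. f p) = (if q = z then 1 else 0)) \<and> (\<forall>x. x \<notin> S \<longrightarrow> f x = 0)"
    using sums supp by blast
next
  fix g :: "'a \<Rightarrow> int"
  assume g: "(\<forall>q\<in>S. (\<Sum>p\<in>{p\<in>S. le p q}. g p) = (if q = z then 1 else 0)) \<and> (\<forall>x. x \<notin> S \<longrightarrow> g x = 0)"
  have "g q = f q" if "q \<in> S" for q
    using that
  proof (induction "rk q" arbitrary: q rule: less_induct)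
    case less
    let ?D = "{p\<in>S. le p q}"
    have qD: "q \<in> ?D" using less.prems le_refl by blast
    have below: "(\<Sum>p\<in>?D - {q}. g p) = (\<Sum>p\<in>?D - {q}. f p)"
      using less rank by (intro sum.cong) auto
    have "g q + (\<Sum>p\<in>?D - {q}. g p) = (\<Sum>p\<in>?D. g p)"
      using fin qD by (simp add: sum.remove)
    also have "\<dots> = (\<Sum>p\<in>?D. f p)"
      using g sums less.prems by simp
    also have "\<dots> = f q + (\<Sum>p\<in>?D - {q}. f p)"
      using fin qD by (simp add: sum.remove)
    finally show "g q = f q"
      using below by simp
  qed
  then show "g = f" using g supp by fastforce
qed

lemma sum_quotient:
  assumes "finite A" and "equiv A r"
  shows "(\<Sum>X\<in>A//r. \<Sum>x\<in>X. g x) = (\<Sum>x\<in>A. g x)"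
proof -
  have "\<forall>X\<in>A//r. finite X"
    using assms finite_equiv_class equiv_type by blast
  moreover have "\<forall>X\<in>A//r. \<forall>Y\<in>A//r. X \<noteq> Y \<longrightarrow> X \<inter> Y = {}"
    using assms(2) quotient_disj by blast
  ultimately show ?thesis
    using sum.Union_disjoint[of "A//r" g] Union_quotient[OF assms(2)] by (simp add: comp_def)
qed

lemma quot_rank_eq:
  assumes eqv: "equiv P \<theta>" and const: "\<forall>(p, q)\<in>\<theta>. rho p = rho q"
    and X: "X \<in> P // \<theta>" and p: "p \<in> X"
  shows "quot_rank rho X = rho p"
proof -
  have "(SOME q. q \<in> X) \<in> X" using p by (rule someI)
  then have "(SOME q. q \<in> X, p) \<in> \<theta>"
    using in_quotient_imp_in_rel[OF eqv X] p by blast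
  then show ?thesis unfolding quot_rank_def using const by auto
qed

lemma quot_rank_image:
  assumes eqv: "equiv P \<theta>" and const: "\<forall>(p, q)\<in>\<theta>. rho p = rho q"
  shows "quot_rank rho ` (P // \<theta>) = rho ` P"
proof
  show "quot_rank rho ` (P // \<theta>) \<subseteq> rho ` P"
  proof
    fix k assume "k \<in> quot_rank rho ` (P // \<theta>)"
    then obtain X where X: "X \<in> P // \<theta>" and k: "k = quot_rank rho X" by blast
    then obtain p where "p \<in> X" using in_quotient_imp_non_empty[OF eqv] by blast
    then show "k \<in> rho ` P"
      using quot_rank_eq[OF eqv const X] in_quotient_imp_subset[OF eqv X] k by blast
  qed
next
  show "rho ` P \<subseteq> quot_rank rho ` (P // \<theta>)"
  proof
    fix k assume "k \<in> rho ` P"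
    then obtain p where p: "p \<in> P" and k: "k = rho p" by blast
    have "\<theta> `` {p} \<in> P // \<theta>" using p by (rule quotientI)
    moreover have "p \<in> \<theta> `` {p}" using eqv p equiv_class_self by fast
    ultimately show "k \<in> quot_rank rho ` (P // \<theta>)"
      using quot_rank_eq[OF eqv const] k by force
  qed
qed

lemma quot_order_in_quotient:
  assumes "quot_order P \<theta> le X Y"
  shows "X \<in> P // \<theta>" and "Y \<in> P // \<theta>"
  using assms unfolding quot_order_def
  by (auto elim: tranclp.cases dest: tranclpD)

lemma quot_order_refl:
  assumes eqv: "equiv P \<theta>" and le_refl: "\<forall>p\<in>P. le p p" and X: "X \<in> P // \<theta>"
  shows "quot_order P \<theta> le X X"
proof -
  obtain p where p: "p \<in> X" using in_quotient_imp_non_empty[OF eqv X] by blast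
  then have "le p p" using le_refl in_quotient_imp_subset[OF eqv X] by blast
  then show ?thesis
    unfolding quot_order_def quot_rel_def using X p by blast
qed

lemma tranclp_rank_less:
  assumes step: "\<And>x y. R x y \<Longrightarrow> x = y \<or> rk x < rk y"
    and "R\<^sup>+\<^sup>+ x y"
  shows "x = y \<or> (rk x :: nat) < rk y"
  using assms(2) by induction (use step in fastforce)+

lemma quot_order_rank_less:
  assumes eqv: "equiv P \<theta>" and const: "\<forall>(p, q)\<in>\<theta>. rho p = rho q"
    and mono: "\<forall>p\<in>P. \<forall>q\<in>P. le p q \<and> p \<noteq> q \<longrightarrow> rho p < rho q"
    and XY: "quot_order P \<theta> le X Y" and ne: "X \<noteq> Y"
  shows "quot_rank rho X < quot_rank rho Y"
proof -
  have "X' = Y' \<or> quot_rank rho X' < quot_rank rho Y'"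
    if X': "X' \<in> P // \<theta>" and Y': "Y' \<in> P // \<theta>" and "quot_rel le X' Y'" for X' Y'
  proof -
    obtain p q where p: "p \<in> X'" and q: "q \<in> Y'" and "le p q"
      using \<open>quot_rel le X' Y'\<close> unfolding quot_rel_def by blast
    show ?thesis
    proof (cases "p = q")
      case True
      then show ?thesis using quotient_disj[OF eqv X' Y'] p q by blast
    next
      case False
      then have "rho p < rho q"
        using mono \<open>le p q\<close> p q in_quotient_imp_subset[OF eqv] X' Y' by blast
      then show ?thesis using quot_rank_eq[OF eqv const] X' Y' p q by simp
    qed
  qed
  then show ?thesis
    using tranclp_rank_less[of _ "quot_rank rho", OF _ XY[unfolded quot_order_def]] ne by blast
qed

lemma moebius_quotient:
  fixes rho :: "'a \<Rightarrow> nat"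
  assumes fin: "finite P" and eqv: "equiv P \<theta>"
    and le_refl: "\<forall>p\<in>P. le p p"
    and mono: "\<forall>p\<in>P. \<forall>q\<in>P. le p q \<and> p \<noteq> q \<longrightarrow> rho p < rho q"
    and const: "\<forall>(p, q)\<in>\<theta>. rho p = rho q"
    and class_sums: "\<forall>p\<in>P. (\<Sum>Q\<in>{Q\<in>P // \<theta>. quot_order P \<theta> le Q (\<theta> `` {p})}.
                         \<Sum>r\<in>Q. moebius P le z r)
                    = (if \<theta> `` {p} = \<theta> `` {z} then 1 else 0)"
  shows "moebius (P // \<theta>) (quot_order P \<theta> le) (\<theta> `` {z})
           = (\<lambda>X. if X \<in> P // \<theta> then \<Sum>r\<in>X. moebius P le z r else 0)"
proof (rule moebius_eqI)
  show "finite (P // \<theta>)"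
    using fin eqv by (simp add: finite_quotient equiv_type)
  show "\<forall>X\<in>P // \<theta>. quot_order P \<theta> le X X"
    using quot_order_refl[of P \<theta> le] eqv le_refl by blast
  show "\<forall>X\<in>P // \<theta>. \<forall>Y\<in>P // \<theta>. quot_order P \<theta> le X Y \<and> X \<noteq> Y
          \<longrightarrow> quot_rank rho X < quot_rank rho Y"
    using quot_order_rank_less[OF eqv const mono] by blast
  show "\<forall>Q\<in>P // \<theta>. (\<Sum>X\<in>{X\<in>P // \<theta>. quot_order P \<theta> le X Q}.
          if X \<in> P // \<theta> then \<Sum>r\<in>X. moebius P le z r else 0) = (if Q = \<theta> `` {z} then 1 else 0)"
  proof
    fix Q assume "Q \<in> P // \<theta>"
    then obtain p where "p \<in> P" and "Q = \<theta> `` {p}" by (rule quotientE)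
    then show "(\<Sum>X\<in>{X\<in>P // \<theta>. quot_order P \<theta> le X Q}.
          if X \<in> P // \<theta> then \<Sum>r\<in>X. moebius P le z r else 0) = (if Q = \<theta> `` {z} then 1 else 0)"
      using class_sums by simp
  qed
qed simp

lemma char_poly_quotient:
  assumes fin: "finite P" and eqv: "equiv P \<theta>"
    and const: "\<forall>(p, q)\<in>\<theta>. rho p = rho q"
    and mu: "\<forall>p\<in>P. moebius (P // \<theta>) le' z' (\<theta> `` {p}) = (\<Sum>q\<in>\<theta> `` {p}. moebius P le z q)"
  shows "char_poly (P // \<theta>) le' z' (quot_rank rho) = char_poly P le z rho"
proof -
  define M where "M = Max (rho ` P)"
  have "monom (moebius (P // \<theta>) le' z' X) (M - quot_rank rho X)
          = (\<Sum>q\<in>X. monom (moebius P le z q) (M - rho q))" if X: "X \<in> P // \<theta>" for X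
  proof -
    obtain p where p: "p \<in> P" and Xp: "X = \<theta> `` {p}" using X by (rule quotientE)
    have "monom (moebius (P // \<theta>) le' z' X) (M - quot_rank rho X)
            = (\<Sum>q\<in>X. monom (moebius P le z q) (M - quot_rank rho X))"
      using mu p Xp by (simp add: monom_sum)
    also have "\<dots> = (\<Sum>q\<in>X. monom (moebius P le z q) (M - rho q))"
      using quot_rank_eq[OF eqv const X] by simp
    finally show ?thesis .
  qed
  then have "char_poly (P // \<theta>) le' z' (quot_rank rho)
               = (\<Sum>X\<in>P // \<theta>. \<Sum>q\<in>X. monom (moebius P le z q) (M - rho q))"
    unfolding char_poly_def quot_rank_image[OF eqv const] M_def by simp
  also have "\<dots> = char_poly P le z rho"
    unfolding char_poly_def M_def using sum_quotient[OF fin eqv] by simp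
  finally show ?thesis .
qed

theorem mainTheorem15:
  fixes P :: "'a set" and le :: "'a \<Rightarrow> 'a \<Rightarrow> bool" and z :: 'a
    and rho :: "'a \<Rightarrow> nat" and \<theta> :: "'a rel"
  assumes fin: "finite P"
    and po: "partial_order_on' P le"
    and zmin: "unique_minimal P le z"
    and graded: "graded_by P le rho"
    and rho0: "rho z = 0"
    and eqv: "equiv P \<theta>"
    and const: "\<forall>(p, q)\<in>\<theta>. rho p = rho q"
    and hyp: "\<forall>p\<in>P. (\<Sum>Q\<in>{Q\<in>P // \<theta>. quot_order P \<theta> le Q (\<theta> `` {p})}.
                         \<Sum>r\<in>Q. moebius P le z r)
                    = (if \<theta> `` {p} = \<theta> `` {z} then 1 else 0)"
  shows "(\<forall>p\<in>P. moebius (P // \<theta>) (quot_order P \<theta> le) (\<theta> `` {z}) (\<theta> `` {p})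
                = (\<Sum>q\<in>\<theta> `` {p}. moebius P le z q))
         \<and> char_poly (P // \<theta>) (quot_order P \<theta> le) (\<theta> `` {z}) (quot_rank rho)
           = char_poly P le z rho"
proof -
  have le_refl: "\<forall>p\<in>P. le p p"
    using po unfolding partial_order_on'_def by blast
  have mono: "\<forall>p\<in>P. \<forall>q\<in>P. le p q \<and> p \<noteq> q \<longrightarrow> rho p < rho q"
    using graded unfolding graded_by_def by blast
  have mu_quot: "\<forall>p\<in>P. moebius (P // \<theta>) (quot_order P \<theta> le) (\<theta> `` {z}) (\<theta> `` {p})
                         = (\<Sum>q\<in>\<theta> `` {p}. moebius P le z q)"
    using moebius_quotient[OF fin eqv le_refl mono const hyp] by (simp add: quotientI)
  then show ?thesis
    using char_poly_quotient[OF fin eqv const] by blast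
qed

end
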